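(* Let $n\ge 1$ and let $[v_0,\dots,v_n]$ and $[v'_0,\dots,v'_n]$ be (non-degenerate) $n$-simplices in $\mathbb{R}^n$. The following are equivalent: (i) there are real numbers $u_0,\dots,u_n$ such that $|v'_i-v'_j| = e^{\frac12(u_i+u_j)}|v_i-v_j|$ for all two-element subsets $\{i,j\}\subseteq\{0,\dots,n\}$; (ii) there is a Möbius transformation $T$ of $\widehat{\mathbb{R}^n}$ such that $v'_i=T(v_i)$ for all $i\in\{0,\dots,n\}$.
   Context: $\widehat{\mathbb{R}^n}=\mathbb{R}^n\cup\{\infty\}$ is the one-point compactification of $\mathbb{R}^n$. A Möbius transformation of $\widehat{\mathbb{R}^n}$ is a composition of inversions in (Euclidean) hyperspheres and reflections in hyperplanes. $|\cdot|$ denotes the Euclidean norm. *)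

theory Defs
  imports "HOL-Analysis.Analysis"
begin

text \<open>The one-point compactification of the Euclidean space 'a is modelled as
  'a option: Some x is the point x, None is the point at infinity.\<close>

definition sphere_inversion :: "'a::euclidean_space \<Rightarrow> real \<Rightarrow> 'a option \<Rightarrow> 'a option" where
  "sphere_inversion a r p = (case p of
      None \<Rightarrow> Some a
    | Some x \<Rightarrow> (if x = a then None
                 else Some (a + (r^2 / (norm (x - a))^2) *\<^sub>R (x - a))))"

definition hyperplane_reflection :: "'a::euclidean_space \<Rightarrow> real \<Rightarrow> 'a option \<Rightarrow> 'a option" where
  "hyperplane_reflection u c p = (case p of
      None \<Rightarrow> None
    | Some x \<Rightarrow> Some (x - (2 * (inner x u - c) / inner u u) *\<^sub>R u))"

inductive mobius :: "('a::euclidean_space option \<Rightarrow> 'a option) \<Rightarrow> bool" where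
  inv: "r > 0 \<Longrightarrow> mobius (sphere_inversion a r)"
| refl: "u \<noteq> 0 \<Longrightarrow> mobius (hyperplane_reflection u c)"
| comp: "mobius f \<Longrightarrow> mobius g \<Longrightarrow> mobius (f \<circ> g)"

end

theory Submission
  imports Defs
begin

text \<open>(ii) \<Rightarrow> (i): inversion in the sphere with centre a and radius r multiplies the
  distance of x and y by r / |x - a| \<cdot> r / |y - a|, and reflections are isometries, so every
  Moebius map rescales distances by a product of positive pointwise weights, and u_i is twice
  the logarithm of the weight at v_i.
  (i) \<Rightarrow> (ii): invert the first simplex in the unit sphere around v_0 and the second in the
  sphere of radius e^(u_0/2) around v'_0. The images of the remaining vertices then have equal
  mutual distances, and any such correspondence of finitely many points is realised by a
  composition of reflections in perpendicular bisectors.\<close>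

definition invert :: "'a::real_inner \<Rightarrow> real \<Rightarrow> 'a \<Rightarrow> 'a" where
  "invert a r x = a + (r\<^sup>2 / (norm (x - a))\<^sup>2) *\<^sub>R (x - a)"

definition reflect :: "'a::real_inner \<Rightarrow> real \<Rightarrow> 'a \<Rightarrow> 'a" where
  "reflect u c x = x - (2 * (x \<bullet> u - c) / (u \<bullet> u)) *\<^sub>R u"

lemma sphere_inversion_Some:
  "x \<noteq> a \<Longrightarrow> sphere_inversion a r (Some x) = Some (invert a r x)"
  by (simp add: sphere_inversion_def invert_def)

lemma sphere_inversion_None: "sphere_inversion a r None = Some a"
  and sphere_inversion_centre: "sphere_inversion a r (Some a) = None"
  by (simp_all add: sphere_inversion_def)

lemma hyperplane_reflection_eq_map_option:
  "hyperplane_reflection u c = map_option (reflect u c)"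
  by (auto simp: hyperplane_reflection_def reflect_def split: option.split)

lemma dist_invert_centre:
  fixes a x :: "'a::real_inner"
  assumes "x \<noteq> a"
  shows "dist (invert a r x) a = r\<^sup>2 / dist x a"
  using assms by (simp add: invert_def dist_norm power2_eq_square)

lemma invert_neq_centre:
  fixes a x :: "'a::real_inner"
  assumes "x \<noteq> a" "r \<noteq> 0"
  shows "invert a r x \<noteq> a"
  using dist_invert_centre[OF assms(1), of r] assms by auto

lemma dist_invert:
  fixes a x y :: "'a::real_inner"
  assumes "x \<noteq> a" "y \<noteq> a"
  shows "dist (invert a r x) (invert a r y) = r\<^sup>2 * dist x y / (dist x a * dist y a)"
proof -
  define X where "X = x - a"
  define Y where "Y = y - a"
  have nX: "norm X > 0" and nY: "norm Y > 0"
    using assms by (auto simp: X_def Y_def)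
  have XX: "X \<bullet> X = (norm X)\<^sup>2" and YY: "Y \<bullet> Y = (norm Y)\<^sup>2"
    by (simp_all add: power2_norm_eq_inner)
  have "(norm ((r\<^sup>2 / (norm X)\<^sup>2) *\<^sub>R X - (r\<^sup>2 / (norm Y)\<^sup>2) *\<^sub>R Y))\<^sup>2
        = (r\<^sup>2)\<^sup>2 * (Y \<bullet> Y - 2 * (X \<bullet> Y) + X \<bullet> X) / ((norm X)\<^sup>2 * (norm Y)\<^sup>2)"
    unfolding power2_norm_eq_inner[of "_ - _"] using nX nY
    by (simp add: inner_diff_left inner_diff_right inner_commute XX YY field_simps power2_eq_square)
  also have "\<dots> = (r\<^sup>2 * norm (X - Y) / (norm X * norm Y))\<^sup>2"
    by (simp add: power2_norm_eq_inner inner_diff_left inner_diff_right inner_commute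
        power_divide power_mult_distrib algebra_simps)
  finally show ?thesis
    using nX nY by (simp add: invert_def dist_norm X_def Y_def power2_eq_iff_nonneg)
qed

lemma invert_invert:
  fixes a x :: "'a::real_inner"
  assumes "x \<noteq> a" "r \<noteq> 0"
  shows "invert a r (invert a r x) = x"
proof -
  define k where "k = r\<^sup>2 / (norm (x - a))\<^sup>2"
  have "k > 0" using assms by (simp add: k_def)
  then have "norm (k *\<^sub>R (x - a)) = k * norm (x - a)"
    by simp
  moreover have "r\<^sup>2 / (k * norm (x - a))\<^sup>2 * k = 1"
    using assms by (simp add: k_def power_mult_distrib field_simps)
  ultimately show ?thesis
    using assms by (simp add: invert_def k_def[symmetric] scaleR_scaleR)
qed

lemma sphere_inversion_invert:
  fixes a x :: "'a::euclidean_space"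
  assumes "x \<noteq> a" "r \<noteq> 0"
  shows "sphere_inversion a r (Some (invert a r x)) = Some x"
  using assms by (simp add: sphere_inversion_Some invert_neq_centre invert_invert)

text \<open>The radius r of the second inversion cancels the multipliers: both sides equal
  dist x y / (dist x a * dist y a).\<close>

lemma dist_invert_rescaled:
  fixes a x y a' x' y' :: "'a::real_inner"
  assumes "x \<noteq> a" "y \<noteq> a" and "s > 0" "t > 0" "r > 0"
    and "dist x' y' = s * t * dist x y"
    and "dist x' a' = s * r * dist x a" "dist y' a' = t * r * dist y a"
  shows "dist (invert a 1 x) (invert a 1 y) = dist (invert a' r x') (invert a' r y')"
proof -
  have "x' \<noteq> a'" "y' \<noteq> a'"
    using assms by auto
  have "dist (invert a 1 x) (invert a 1 y) = dist x y / (dist x a * dist y a)"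
    using assms by (simp add: dist_invert)
  also have "\<dots> = r\<^sup>2 * (s * t * dist x y) / ((s * r * dist x a) * (t * r * dist y a))"
    using assms by (simp add: field_simps power2_eq_square)
  also have "\<dots> = dist (invert a' r x') (invert a' r y')"
    using assms \<open>x' \<noteq> a'\<close> \<open>y' \<noteq> a'\<close> by (simp add: dist_invert)
  finally show ?thesis .
qed

lemma dist_reflect:
  fixes u x y :: "'a::real_inner"
  assumes "u \<noteq> 0"
  shows "dist (reflect u c x) (reflect u c y) = dist x y"
proof -
  define d where "d = x - y"
  define k where "k = 2 * (d \<bullet> u) / (u \<bullet> u)"
  have "reflect u c x - reflect u c y = d - k *\<^sub>R u"
    by (simp add: reflect_def d_def k_def inner_diff_left algebra_simps diff_divide_distrib)
  moreover have "(norm (d - k *\<^sub>R u))\<^sup>2 = (norm d)\<^sup>2"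
  proof -
    have "k * (u \<bullet> u) = 2 * (d \<bullet> u)"
      using assms by (simp add: k_def)
    then show ?thesis
      unfolding power2_norm_eq_inner
      by (simp add: inner_diff_left inner_diff_right inner_commute algebra_simps)
  qed
  ultimately show ?thesis
    by (simp add: dist_norm d_def)
qed

lemma reflect_bisector:
  fixes p q x :: "'a::real_inner"
  defines "u \<equiv> q - p" and "c \<equiv> (q \<bullet> q - p \<bullet> p) / 2"
  assumes "p \<noteq> q"
  shows "reflect u c p = q"
    and "dist x p = dist x q \<Longrightarrow> reflect u c x = x"
proof -
  have "u \<bullet> u > 0" using assms by (simp add: u_def)
  moreover have "2 * (p \<bullet> u - c) = - (u \<bullet> u)"
    by (simp add: u_def c_def inner_diff_left inner_diff_right inner_commute field_simps)
  ultimately show "reflect u c p = q"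
    by (simp add: reflect_def u_def)
next
  assume "dist x p = dist x q"
  then have "(norm (x - p))\<^sup>2 = (norm (x - q))\<^sup>2"
    by (simp add: dist_norm)
  then have "x \<bullet> u = c"
    by (simp add: power2_norm_eq_inner u_def c_def inner_diff_left inner_diff_right
        inner_commute algebra_simps)
  then show "reflect u c x = x"
    by (simp add: reflect_def)
qed

text \<open>The value 1 for distances to the point at infinity is arbitrary: it only has to be
  positive, so that inversions admit positive weights at their centre and at infinity.\<close>

fun ext_dist :: "'a::metric_space option \<Rightarrow> 'a option \<Rightarrow> real" where
  "ext_dist (Some x) (Some y) = dist x y"
| "ext_dist None None = 0"
| "ext_dist (Some x) None = 1"
| "ext_dist None (Some y) = 1"

lemma ext_dist_commute: "ext_dist p q = ext_dist q p"
  by (cases p; cases q) (simp_all add: dist_commute)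

definition scales_ext_dist :: "('a::metric_space option \<Rightarrow> 'a option) \<Rightarrow> ('a option \<Rightarrow> real) \<Rightarrow> bool"
  where "scales_ext_dist T t \<longleftrightarrow>
    (\<forall>p. 0 < t p) \<and> (\<forall>p q. ext_dist (T p) (T q) = t p * t q * ext_dist p q)"

lemma scales_ext_dist_comp:
  assumes "scales_ext_dist T s" "scales_ext_dist S t"
  shows "scales_ext_dist (T \<circ> S) (\<lambda>p. s (S p) * t p)"
  using assms by (simp add: scales_ext_dist_def)

lemma scales_ext_dist_hyperplane_reflection:
  fixes u :: "'a::euclidean_space"
  assumes "u \<noteq> 0"
  shows "scales_ext_dist (hyperplane_reflection u c) (\<lambda>_. 1)"
  unfolding scales_ext_dist_def hyperplane_reflection_eq_map_option
proof (intro conjI allI)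
  show "ext_dist (map_option (reflect u c) p) (map_option (reflect u c) q) = 1 * 1 * ext_dist p q"
    for p q
    using dist_reflect[OF assms] by (cases p; cases q) auto
qed simp

lemma scales_ext_dist_sphere_inversion:
  fixes a :: "'a::euclidean_space"
  assumes r: "r > 0"
  shows "scales_ext_dist (sphere_inversion a r)
           (\<lambda>p. case p of None \<Rightarrow> r | Some x \<Rightarrow> if x = a then 1 / r else r / dist x a)"
    (is "scales_ext_dist _ ?t")
  unfolding scales_ext_dist_def
proof (intro conjI allI)
  show "0 < ?t p" for p
    using r by (auto split: option.split)
next
  let ?S = "sphere_inversion a r"
  have centre: "ext_dist (?S (Some x)) (?S None) = ?t (Some x) * ?t None * ext_dist (Some x) None"
    if "x \<noteq> a" for x
    using that r by (simp add: sphere_inversion_Some sphere_inversion_None dist_invert_centre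
        power2_eq_square)
  have infinity: "ext_dist (?S (Some x)) (?S (Some a)) = ?t (Some x) * ?t (Some a) * dist x a"
    if "x \<noteq> a" for x
    using that r by (simp add: sphere_inversion_Some sphere_inversion_centre)
  show "ext_dist (?S p) (?S q) = ?t p * ?t q * ext_dist p q" for p q
  proof (cases p; cases q)
    fix x y
    assume "p = Some x" "q = Some y"
    then show ?thesis
      using infinity[of x] infinity[of y] r
      by (cases "x = a"; cases "y = a")
         (auto simp: sphere_inversion_Some sphere_inversion_centre dist_invert
           power2_eq_square dist_commute)
  qed (use centre r ext_dist_commute[of "Some a"]
      in \<open>auto simp: sphere_inversion_None sphere_inversion_centre\<close>)
qed

lemma mobius_scales_ext_dist:
  fixes T :: "'a::euclidean_space option \<Rightarrow> 'a option"
  assumes "mobius T"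
  shows "\<exists>t. scales_ext_dist T t"
  using assms
proof induction
  case (inv r a)
  then show ?case using scales_ext_dist_sphere_inversion by blast
next
  case (refl u c)
  then show ?case using scales_ext_dist_hyperplane_reflection by blast
next
  case (comp f g)
  then show ?case using scales_ext_dist_comp by blast
qed

lemma mobius_map_option_reflect:
  fixes u :: "'a::euclidean_space"
  assumes "u \<noteq> 0"
  shows "mobius (map_option (reflect u c))"
  using mobius.refl[OF assms] by (simp add: hyperplane_reflection_eq_map_option)

text \<open>Each new point is moved onto its target by the reflection in the perpendicular bisector
  of its current image and the target; this fixes the points already placed, as they are
  equidistant from both.\<close>

lemma finite_isometry_extension:
  fixes p q :: "'i \<Rightarrow> 'a::euclidean_space"
  assumes "finite S" and "\<forall>i\<in>S. \<forall>j\<in>S. dist (p i) (p j) = dist (q i) (q j)"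
  shows "\<exists>g. mobius (map_option g) \<and> (\<forall>x y. dist (g x) (g y) = dist x y) \<and> (\<forall>i\<in>S. g (p i) = q i)"
  using assms
proof (induction S rule: finite_induct)
  case empty
  obtain b :: 'a where "b \<in> Basis"
    using nonempty_Basis by blast
  then have "b \<noteq> 0" by auto
  then show ?case
    using mobius_map_option_reflect dist_reflect by (intro exI[of _ "reflect b 0"]) auto
next
  case (insert k S)
  then obtain g where g: "mobius (map_option g)" "\<forall>x y. dist (g x) (g y) = dist x y"
      "\<forall>i\<in>S. g (p i) = q i"
    by auto
  show ?case
  proof (cases "g (p k) = q k")
    case True
    then show ?thesis using g by auto
  next
    case False
    define u where "u = q k - g (p k)"
    define c where "c = (q k \<bullet> q k - g (p k) \<bullet> g (p k)) / 2"
    have u: "u \<noteq> 0" using False by (simp add: u_def)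
    have fixed: "reflect u c (q i) = q i" if "i \<in> S" for i
    proof -
      have "dist (q i) (g (p k)) = dist (g (p i)) (g (p k))"
        using that g(3) by simp
      also have "\<dots> = dist (p i) (p k)"
        using g(2) by blast
      also have "\<dots> = dist (q i) (q k)"
        using that insert.prems by blast
      finally show ?thesis
        unfolding u_def c_def by (rule reflect_bisector(2)[OF False])
    qed
    have "map_option (reflect u c \<circ> g) = map_option (reflect u c) \<circ> map_option g"
      by (simp add: fun_eq_iff option.map_comp)
    then have "mobius (map_option (reflect u c \<circ> g))"
      using mobius.comp[OF mobius_map_option_reflect[OF u, of c] g(1)] by simp
    moreover have "\<forall>i\<in>insert k S. (reflect u c \<circ> g) (p i) = q i"
      using fixed g(3) reflect_bisector(1)[OF False] by (simp add: u_def c_def)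
    moreover have "\<forall>x y. dist ((reflect u c \<circ> g) x) ((reflect u c \<circ> g) y) = dist x y"
      using g(2) dist_reflect[OF u] by simp
    ultimately show ?thesis
      by (intro exI[of _ "reflect u c \<circ> g"]) blast
  qed
qed

lemma dist_multipliers_if_mobius:
  fixes v v' :: "'i \<Rightarrow> 'a::euclidean_space"
  assumes "mobius T" and "\<forall>i\<in>I. T (Some (v i)) = Some (v' i)"
  shows "\<exists>e. (\<forall>i. 0 < e i) \<and> (\<forall>i\<in>I. \<forall>j\<in>I. dist (v' i) (v' j) = e i * e j * dist (v i) (v j))"
proof -
  obtain t where t: "\<forall>p. 0 < t p" "\<forall>p q. ext_dist (T p) (T q) = t p * t q * ext_dist p q"
    using mobius_scales_ext_dist[OF assms(1)] unfolding scales_ext_dist_def by blast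
  have "dist (v' i) (v' j) = t (Some (v i)) * t (Some (v j)) * dist (v i) (v j)"
    if "i \<in> I" "j \<in> I" for i j
    using t(2)[rule_format, of "Some (v i)" "Some (v j)"] assms(2) that by simp
  with t(1) show ?thesis
    by (intro exI[of _ "\<lambda>i. t (Some (v i))"]) simp
qed

lemma mobius_if_dist_multipliers:
  fixes v v' :: "'i \<Rightarrow> 'a::euclidean_space"
  assumes "finite I" and "inj_on v I" and e: "\<forall>i. 0 < e i"
    and dist_v': "\<forall>i\<in>I. \<forall>j\<in>I. i \<noteq> j \<longrightarrow> dist (v' i) (v' j) = e i * e j * dist (v i) (v j)"
  shows "\<exists>T. mobius T \<and> (\<forall>i\<in>I. T (Some (v i)) = Some (v' i))"
proof (cases "I = {}")
  case True
  obtain g :: "'a \<Rightarrow> 'a" where "mobius (map_option g)"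
    using finite_isometry_extension[of "{}" v v'] by blast
  with True show ?thesis
    by blast
next
  case False
  then obtain k where k: "k \<in> I" by blast
  have ne: "v i \<noteq> v k" "v' i \<noteq> v' k" if "i \<in> I - {k}" for i
  proof -
    show "v i \<noteq> v k"
      using that k inj_onD[OF assms(2), of i k] by auto
    moreover have "dist (v' i) (v' k) = e i * e k * dist (v i) (v k)"
      using that k dist_v' by auto
    ultimately show "v' i \<noteq> v' k"
      using e by (metis dist_eq_0_iff mult_eq_0_iff less_irrefl)
  qed
  define w where "w i = invert (v k) 1 (v i)" for i
  define w' where "w' i = invert (v' k) (e k) (v' i)" for i
  have "dist (w i) (w j) = dist (w' i) (w' j)" if "i \<in> I - {k}" "j \<in> I - {k}" for i j
  proof (cases "i = j")
    case False
    then show ?thesis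
      unfolding w_def w'_def using that ne k e dist_v'
      by (intro dist_invert_rescaled[where s = "e i" and t = "e j"]) auto
  qed simp
  then obtain g where g: "mobius (map_option g)" "\<forall>i\<in>I - {k}. g (w i) = w' i"
    using finite_isometry_extension[of "I - {k}" w w'] assms(1) by blast
  define T where "T = sphere_inversion (v' k) (e k) \<circ> map_option g \<circ> sphere_inversion (v k) 1"
  have "mobius T"
    unfolding T_def using e by (intro mobius.comp mobius.inv g) auto
  moreover have "T (Some (v i)) = Some (v' i)" if "i \<in> I" for i
  proof (cases "i = k")
    case True
    then show ?thesis
      by (simp add: T_def sphere_inversion_None sphere_inversion_centre)
  next
    case False
    then have i: "i \<in> I - {k}"
      using that by simp
    have "sphere_inversion (v' k) (e k) (Some (w' i)) = Some (v' i)"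
      unfolding w'_def using ne(2)[OF i] e[rule_format, of k]
      by (simp add: sphere_inversion_invert)
    moreover have "sphere_inversion (v k) 1 (Some (v i)) = Some (w i)"
      using ne(1)[OF i] by (simp add: w_def sphere_inversion_Some)
    ultimately show ?thesis
      using g(2) i by (simp add: T_def)
  qed
  ultimately show ?thesis by blast
qed

theorem lemma3p1:
  fixes v v' :: "nat \<Rightarrow> 'a::euclidean_space"
  assumes "inj_on v {0..DIM('a)}" and "\<not> affine_dependent (v ` {0..DIM('a)})"
      and "inj_on v' {0..DIM('a)}" and "\<not> affine_dependent (v' ` {0..DIM('a)})"
  shows "(\<exists>u :: nat \<Rightarrow> real. \<forall>i\<in>{0..DIM('a)}. \<forall>j\<in>{0..DIM('a)}. i \<noteq> j \<longrightarrow>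
            dist (v' i) (v' j) = exp ((u i + u j) / 2) * dist (v i) (v j))
         \<longleftrightarrow>
         (\<exists>T. mobius T \<and> (\<forall>i\<in>{0..DIM('a)}. T (Some (v i)) = Some (v' i)))"
proof
  have exp_half: "exp ((x + y) / 2) = exp (x / 2) * exp (y / 2)" for x y :: real
    by (simp add: exp_add[symmetric] add_divide_distrib)
  assume "\<exists>u. \<forall>i\<in>{0..DIM('a)}. \<forall>j\<in>{0..DIM('a)}. i \<noteq> j \<longrightarrow>
            dist (v' i) (v' j) = exp ((u i + u j) / 2) * dist (v i) (v j)"
  then obtain u where "\<forall>i\<in>{0..DIM('a)}. \<forall>j\<in>{0..DIM('a)}. i \<noteq> j \<longrightarrow>
      dist (v' i) (v' j) = exp (u i / 2) * exp (u j / 2) * dist (v i) (v j)"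
    unfolding exp_half by blast
  then show "\<exists>T. mobius T \<and> (\<forall>i\<in>{0..DIM('a)}. T (Some (v i)) = Some (v' i))"
    using mobius_if_dist_multipliers[of "{0..DIM('a)}" v "\<lambda>i. exp (u i / 2)"] assms(1) by auto
next
  assume "\<exists>T. mobius T \<and> (\<forall>i\<in>{0..DIM('a)}. T (Some (v i)) = Some (v' i))"
  then obtain e where e: "\<forall>i. 0 < e i"
    and "\<forall>i\<in>{0..DIM('a)}. \<forall>j\<in>{0..DIM('a)}. dist (v' i) (v' j) = e i * e j * dist (v i) (v j)"
    using dist_multipliers_if_mobius by blast
  moreover have "exp ((2 * ln (e i) + 2 * ln (e j)) / 2) = e i * e j" for i j
  proof -
    have "exp ((2 * ln (e i) + 2 * ln (e j)) / 2) = exp (ln (e i)) * exp (ln (e j))"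
      by (simp add: exp_add[symmetric])
    then show ?thesis
      using e by simp
  qed
  ultimately show "\<exists>u. \<forall>i\<in>{0..DIM('a)}. \<forall>j\<in>{0..DIM('a)}. i \<noteq> j \<longrightarrow>
      dist (v' i) (v' j) = exp ((u i + u j) / 2) * dist (v i) (v j)"
    by (intro exI[of _ "\<lambda>i. 2 * ln (e i)"]) simp
qed

end
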